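(* Let $1\le p<2$, $f\in\mathcal H_0$, $u$ the solution of $\partial_tu+\partial J(u)\ni0$, $u(0)=f$, with extinction time $T_{\mathrm{ex}}<\infty$, and $w(t):=u(t)/a(t)$ with $a(t)=(1-t/T_{\mathrm{ex}})^{1/(2-p)}$, $0\le t<T_{\mathrm{ex}}$. Let $w_*$ be an asymptotic profile, i.e. $w_*\in\mathcal H$ with $w(t_k)\to w_*$ strongly for some sequence $t_k\nearrow T_{\mathrm{ex}}$. Then $(2-p)\lambda_1T_{\mathrm{ex}}\le\|w_*\|^{2-p}$, and equality holds if and only if $w_*$ is a ground state.
   Context: $\mathcal H$ is a real Hilbert space with inner product $\langle\cdot,\cdot\rangle$ and norm $\|\cdot\|$. $J:\mathcal H\to\mathbb R\cup\{\infty\}$ is convex, lower semicontinuous, proper, with dense effective domain, and absolutely $p$-homogeneous: $J(cu)=|c|^pJ(u)$ for $c\ne0$, $J(0)=0$. $\partial J(u)=\{\zeta: J(u)+\langle\zeta,v-u\rangle\le J(v)\ \forall v\}$; $\mathcal N(J)=\{u:J(u)=0\}$; $\mathcal H_0:=\mathcal N(J)^\perp\setminus\{0\}$. Standing coercivity assumption: $\lambda_1:=\inf_{u\in\mathcal H_0}R(u)>0$ with Rayleigh quotient $R(u):=pJ(u)/\|u\|^p$; a ground state is a minimizer of $R$ over $\mathcal H_0$. The gradient flow solution (Brezis) is the unique continuous $u:[0,\infty)\to\mathcal H$, Lipschitz on $[\delta,\infty)$ for all $\delta>0$, right-differentiable on $(0,\infty)$ with $u(0)=f$ and $\partial_t^+u(t)=-\zeta(t)$,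 $\zeta(t)$ the minimal-norm element of $\partial J(u(t))$. $T_{\mathrm{ex}}:=\inf\{T>0:u(t)=0\ \forall t\ge T\}$. *)

theory Defs
  imports "HOL-Analysis.Analysis"
begin

definition convex_ereal :: "('a::real_vector \<Rightarrow> ereal) \<Rightarrow> bool" where
  "convex_ereal J \<longleftrightarrow> (\<forall>u v. \<forall>t::real. 0 < t \<and> t < 1 \<longrightarrow>
      J ((1 - t) *\<^sub>R u + t *\<^sub>R v) \<le> ereal (1 - t) * J u + ereal t * J v)"

definition lsc_ereal :: "('a::topological_space \<Rightarrow> ereal) \<Rightarrow> bool" where
  "lsc_ereal J \<longleftrightarrow> (\<forall>c::real. closed {u. J u \<le> ereal c})"

definition proper_fun :: "('a \<Rightarrow> ereal) \<Rightarrow> bool" where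
  "proper_fun J \<longleftrightarrow> (\<forall>u. J u \<noteq> -\<infinity>) \<and> (\<exists>u. J u \<noteq> \<infinity>)"

definition dense_domain :: "('a::topological_space \<Rightarrow> ereal) \<Rightarrow> bool" where
  "dense_domain J \<longleftrightarrow> closure {u. J u < \<infinity>} = UNIV"

definition abs_homogeneous :: "real \<Rightarrow> ('a::real_vector \<Rightarrow> ereal) \<Rightarrow> bool" where
  "abs_homogeneous p J \<longleftrightarrow> J 0 = 0 \<and>
      (\<forall>c u. c \<noteq> 0 \<longrightarrow> J (c *\<^sub>R u) = ereal (\<bar>c\<bar> powr p) * J u)"

definition admissible :: "real \<Rightarrow> ('a::{real_inner,complete_space} \<Rightarrow> ereal) \<Rightarrow> bool" where
  "admissible p J \<longleftrightarrow> convex_ereal J \<and> lsc_ereal J \<and> proper_fun J \<and> dense_domain J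
      \<and> abs_homogeneous p J"

definition subdiff :: "('a::real_inner \<Rightarrow> ereal) \<Rightarrow> 'a \<Rightarrow> 'a set" where
  "subdiff J u = {\<zeta>. \<forall>v. J u + ereal (inner \<zeta> (v - u)) \<le> J v}"

definition nullspace :: "('a::real_inner \<Rightarrow> ereal) \<Rightarrow> 'a set" where
  "nullspace J = {u. J u = 0}"

definition H0 :: "('a::real_inner \<Rightarrow> ereal) \<Rightarrow> 'a set" where
  "H0 J = {u. \<forall>v\<in>nullspace J. inner u v = 0} - {0}"

definition rayleigh :: "real \<Rightarrow> ('a::real_inner \<Rightarrow> ereal) \<Rightarrow> 'a \<Rightarrow> ereal" where
  "rayleigh p J u = ereal p * J u / ereal (norm u powr p)"

definition lambda1 :: "real \<Rightarrow> ('a::real_inner \<Rightarrow> ereal) \<Rightarrow> ereal" where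
  "lambda1 p J = (INF u\<in>H0 J. rayleigh p J u)"

definition ground_state :: "real \<Rightarrow> ('a::real_inner \<Rightarrow> ereal) \<Rightarrow> 'a \<Rightarrow> bool" where
  "ground_state p J u \<longleftrightarrow> u \<in> H0 J \<and> rayleigh p J u = lambda1 p J"

definition min_norm_elem :: "'a::real_normed_vector set \<Rightarrow> 'a \<Rightarrow> bool" where
  "min_norm_elem S z \<longleftrightarrow> z \<in> S \<and> (\<forall>y\<in>S. norm z \<le> norm y)"

text \<open>Brezis gradient flow solution of du/dt + dJ(u) \<ni> 0, u(0) = f.\<close>
definition gradient_flow :: "('a::{real_inner,complete_space} \<Rightarrow> ereal) \<Rightarrow> 'a \<Rightarrow> (real \<Rightarrow> 'a) \<Rightarrow> bool" where
  "gradient_flow J f u \<longleftrightarrow>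
     continuous_on {0..} u \<and>
     (\<forall>\<delta>>0. \<exists>L. L-lipschitz_on {\<delta>..} u) \<and>
     u 0 = f \<and>
     (\<forall>t>0. \<exists>\<zeta>. min_norm_elem (subdiff J (u t)) \<zeta> \<and>
                 (u has_vector_derivative (- \<zeta>)) (at t within {t..}))"

definition extinction_time :: "(real \<Rightarrow> 'a::zero) \<Rightarrow> real" where
  "extinction_time u = Inf {T. T > 0 \<and> (\<forall>t\<ge>T. u t = 0)}"

end

theory Submission
  imports Defs
begin

text \<open>
  For \<open>p < 2\<close> the quantity \<open>\<parallel>u(t)\<parallel>\<^sup>2\<^sup>-\<^sup>p\<close> decreases at rate \<open>(2 - p) R(u(t)) \<ge> (2 - p) \<lambda>\<^sub>1\<close>
  and vanishes at the extinction time, so \<open>\<parallel>u(t)\<parallel>\<^sup>2\<^sup>-\<^sup>p \<ge> (2 - p) \<lambda>\<^sub>1 (T\<^sub>e\<^sub>x - t)\<close>; read at the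
  times \<open>t\<^sub>k\<close> this is the inequality for the profile. The flows restarted at \<open>t\<^sub>k\<close> and rescaled by
  \<open>b\<^sub>k = 1 - t\<^sub>k / T\<^sub>e\<^sub>x\<close> in time and \<open>b\<^sub>k\<^sup>-\<^sup>1\<^sup>/\<^sup>(\<^sup>2\<^sup>-\<^sup>p\<^sup>)\<close> in space are again flows of J, start at
  \<open>w(t\<^sub>k)\<close>, extinguish at \<open>T\<^sub>e\<^sub>x\<close>, and contract towards each other.

  If \<open>w\<^sub>*\<close> is a ground state, the separable solution through \<open>w\<^sub>*\<close> extinguishes at
  \<open>S = \<parallel>w\<^sub>*\<parallel>\<^sup>2\<^sup>-\<^sup>p / ((2 - p) \<lambda>\<^sub>1)\<close>; the same contraction argument against the rescaled flows
  (a ground state pairs monotonically with every point orthogonal to the null space) forces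
  \<open>S \<le> T\<^sub>e\<^sub>x\<close>. Conversely, in the equality case the energy estimate leaves no room: shortly after
  the restart the Rayleigh quotient of the rescaled flow drops below \<open>\<lambda>\<^sub>1 + \<epsilon>\<close> while the flow is
  still close to \<open>w\<^sub>*\<close>, and lower semicontinuity of J yields \<open>R(w\<^sub>*) \<le> \<lambda>\<^sub>1\<close>.
\<close>

section \<open>Monotonicity from right derivatives\<close>

lemma real_induction_nonpos:
  fixes h :: "real \<Rightarrow> real"
  assumes "a \<le> b" and cont: "continuous_on {a..b} h" and "h a \<le> 0"
    and step: "\<And>c. a \<le> c \<Longrightarrow> c < b \<Longrightarrow> h c \<le> 0 \<Longrightarrow> \<exists>d>0. \<forall>s. c < s \<and> s < c + d \<longrightarrow> h s \<le> 0"
  shows "h b \<le> 0"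
proof -
  define K where "K = {a..b} \<inter> h -` {..0}"
  have "closed K"
    unfolding K_def by (rule continuous_closed_preimage[OF cont]) auto
  moreover have "a \<in> K" and "bdd_above K"
    using assms by (auto simp: K_def intro: bdd_aboveI[of _ b])
  ultimately have c: "Sup K \<in> K"
    by (auto intro: closed_contains_Sup)
  have "Sup K = b"
  proof (rule ccontr)
    assume "Sup K \<noteq> b"
    with c have lt: "Sup K < b" "a \<le> Sup K" "h (Sup K) \<le> 0"
      by (auto simp: K_def)
    then obtain d where "d > 0" and d: "\<forall>s. Sup K < s \<and> s < Sup K + d \<longrightarrow> h s \<le> 0"
      using step by blast
    define m where "m = min d (b - Sup K)"
    have "0 < m" "m \<le> d" "m \<le> b - Sup K"
      using \<open>d > 0\<close> lt by (auto simp: m_def)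
    define s where "s = Sup K + m / 2"
    have "Sup K < s" "s < Sup K + d" "s \<le> b"
      using \<open>0 < m\<close> \<open>m \<le> d\<close> \<open>m \<le> b - Sup K\<close> by (auto simp: s_def)
    then have "s \<in> K"
      using d lt by (auto simp: K_def)
    with \<open>Sup K < s\<close> show False
      using cSup_upper[OF _ \<open>bdd_above K\<close>] by fastforce
  qed
  with c show ?thesis
    by (simp add: K_def)
qed

lemma DERIV_right_nonpos_imp_decreasing:
  fixes g :: "real \<Rightarrow> real"
  assumes "a \<le> b" and cont: "continuous_on {a..b} g"
    and der: "\<And>t. a < t \<Longrightarrow> t < b \<Longrightarrow> \<exists>D. (g has_real_derivative D) (at t within {t..}) \<and> D \<le> 0"
  shows "g b \<le> g a"
proof (rule field_le_epsilon)
  fix e :: real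
  assume "e > 0"
  txt \<open>The offset makes h negative at a, where no derivative is available, so that continuity
    starts the induction there.\<close>
  define \<epsilon> where "\<epsilon> = e / (b - a + 1)"
  have e': "\<epsilon> > 0"
    using \<open>e > 0\<close> \<open>a \<le> b\<close> by (simp add: \<epsilon>_def)
  define h where "h s = g s - g a - \<epsilon> * (s - a + 1)" for s
  have cont_h: "continuous_on {a..b} h"
    unfolding h_def by (intro continuous_intros cont)
  have "h b \<le> 0"
  proof (rule real_induction_nonpos[OF \<open>a \<le> b\<close> cont_h])
    show "h a \<le> 0"
      using e' by (simp add: h_def)
    fix c assume c: "a \<le> c" "c < b" "h c \<le> 0"
    show "\<exists>d>0. \<forall>s. c < s \<and> s < c + d \<longrightarrow> h s \<le> 0"
    proof (cases "c = a")
      case True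
      have "h a < 0"
        using e' by (simp add: h_def)
      then have "\<forall>\<^sub>F s in at a within {a..b}. h s < 0"
        using cont_h \<open>a \<le> b\<close> by (auto simp: continuous_on_def intro: order_tendstoD)
      then obtain d where "d > 0" and d: "\<And>s. s \<in> {a..b} \<Longrightarrow> s \<noteq> a \<Longrightarrow> dist s a < d \<Longrightarrow> h s < 0"
        by (auto simp: eventually_at)
      show ?thesis
        using \<open>d > 0\<close> c True
        by (intro exI[of _ "min d (b - a)"]) (auto simp: dist_real_def intro!: less_imp_le d)
    next
      case False
      obtain D where "(g has_real_derivative D) (at c within {c..})" "D \<le> 0"
        using der c False by force
      then have "(h has_real_derivative D - \<epsilon>) (at c within {c..})"
        unfolding h_def by (auto intro!: derivative_eq_intros)
      from has_real_derivative_neg_dec_right[OF this] obtain d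
        where "d > 0" and "\<forall>k>0. c + k \<in> {c..} \<longrightarrow> k < d \<longrightarrow> h (c + k) < h c"
        using e' \<open>D \<le> 0\<close> by auto
      then show ?thesis
        using c by (intro exI[of _ d]) (auto dest: spec[of _ "_ - c"])
    qed
  qed
  moreover have "\<epsilon> * (b - a + 1) = e"
    using \<open>a \<le> b\<close> by (simp add: \<epsilon>_def)
  ultimately show "g b \<le> g a + e"
    by (simp add: h_def)
qed

lemma DERIV_right_zero_imp_constant:
  fixes g :: "real \<Rightarrow> real"
  assumes "a \<le> b" and "continuous_on {a..b} g"
    and "\<And>t. a < t \<Longrightarrow> t < b \<Longrightarrow> (g has_real_derivative 0) (at t within {t..})"
  shows "g b = g a"
proof -
  have "g b \<le> g a"
    using assms(1,2) by (rule DERIV_right_nonpos_imp_decreasing) (use assms(3) in blast)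
  moreover have "- g b \<le> - g a"
  proof (rule DERIV_right_nonpos_imp_decreasing[OF \<open>a \<le> b\<close>])
    show "continuous_on {a..b} (\<lambda>t. - g t)"
      using assms(2) by (rule continuous_on_minus)
    fix t assume "a < t" "t < b"
    then have "((\<lambda>t. - g t) has_real_derivative - 0) (at t within {t..})"
      using assms(3) by (intro DERIV_minus)
    then show "\<exists>D. ((\<lambda>t. - g t) has_real_derivative D) (at t within {t..}) \<and> D \<le> 0"
      by auto
  qed
  ultimately show ?thesis
    by simp
qed

lemma has_vector_derivative_norm_powr:
  fixes z :: "real \<Rightarrow> 'a::real_inner"
  assumes z: "(z has_vector_derivative v) (at t within S)" and "z t \<noteq> 0"
  shows "((\<lambda>t. norm (z t) powr a) has_real_derivative a * norm (z t) powr (a - 2) * inner (z t) v)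
           (at t within S)"
proof -
  have "((\<lambda>t. norm (z t)) has_real_derivative inner (sgn (z t)) v) (at t within S)"
    unfolding has_field_derivative_def
    by (rule has_derivative_eq_rhs[OF has_derivative_compose[OF
          z[unfolded has_vector_derivative_def] has_derivative_norm[OF \<open>z t \<noteq> 0\<close>]]])
      (simp add: fun_eq_iff inner_commute)
  then have "((\<lambda>t. norm (z t) powr a) has_real_derivative
      a * norm (z t) powr (a - 1) * inner (sgn (z t)) v) (at t within S)"
    using \<open>z t \<noteq> 0\<close> by (intro DERIV_chain2[OF has_real_derivative_powr]) auto
  moreover have "norm (z t) powr (a - 1) * inner (sgn (z t)) v = norm (z t) powr (a - 2) * inner (z t) v"
    using \<open>z t \<noteq> 0\<close> by (simp add: sgn_div_norm powr_diff power2_eq_square divide_inverse)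
  ultimately show ?thesis
    by (simp add: mult.assoc)
qed

lemma norm_diff_decreasing_if_monotone:
  fixes x y :: "real \<Rightarrow> 'a::real_inner"
  assumes "a \<le> b" and "continuous_on {a..b} x" and "continuous_on {a..b} y"
    and der: "\<And>t. a < t \<Longrightarrow> t < b \<Longrightarrow> \<exists>\<xi> \<eta>. (x has_vector_derivative - \<xi>) (at t within {t..})
        \<and> (y has_vector_derivative - \<eta>) (at t within {t..}) \<and> 0 \<le> inner (\<xi> - \<eta>) (x t - y t)"
  shows "norm (x b - y b) \<le> norm (x a - y a)"
proof -
  define z where "z t = x t - y t" for t
  have "inner (z b) (z b) \<le> inner (z a) (z a)"
  proof (rule DERIV_right_nonpos_imp_decreasing[OF \<open>a \<le> b\<close>])
    show "continuous_on {a..b} (\<lambda>t. inner (z t) (z t))"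
      unfolding z_def using assms by (intro continuous_intros)
    fix t assume "a < t" "t < b"
    then obtain \<xi> \<eta> where "(x has_vector_derivative - \<xi>) (at t within {t..})"
        "(y has_vector_derivative - \<eta>) (at t within {t..})" and mono: "0 \<le> inner (\<xi> - \<eta>) (z t)"
      using der unfolding z_def by blast
    then have zd: "(z has_derivative (\<lambda>h. h *\<^sub>R - (\<xi> - \<eta>))) (at t within {t..})"
      unfolding z_def has_vector_derivative_def[symmetric] by (auto dest: has_vector_derivative_diff)
    have "((\<lambda>t. inner (z t) (z t)) has_real_derivative - 2 * inner (\<xi> - \<eta>) (z t)) (at t within {t..})"
      unfolding has_field_derivative_def
      by (rule has_derivative_eq_rhs[OF has_derivative_inner[OF zd zd]])
        (simp add: fun_eq_iff inner_commute algebra_simps)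
    with mono show "\<exists>D. ((\<lambda>t. inner (z t) (z t)) has_real_derivative D) (at t within {t..}) \<and> D \<le> 0"
      by (intro exI[of _ "- 2 * inner (\<xi> - \<eta>) (z t)"]) simp
  qed
  then have "(norm (z b))\<^sup>2 \<le> (norm (z a))\<^sup>2"
    by (simp add: power2_norm_eq_inner)
  then show ?thesis
    unfolding z_def by (rule power2_le_imp_le) simp
qed

section \<open>Homogeneous convex functionals\<close>

lemma admissible_scaleR: "admissible p J \<Longrightarrow> c \<noteq> 0 \<Longrightarrow> J (c *\<^sub>R u) = ereal (\<bar>c\<bar> powr p) * J u"
  by (simp add: admissible_def abs_homogeneous_def)

lemma admissible_zero: "admissible p J \<Longrightarrow> J 0 = 0"
  by (simp add: admissible_def abs_homogeneous_def)

lemma admissible_not_MInf: "admissible p J \<Longrightarrow> J u \<noteq> -\<infinity>"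
  by (simp add: admissible_def proper_fun_def)

lemma admissible_nonneg:
  assumes "admissible p J"
  shows "0 \<le> J u"
proof -
  have "convex_ereal J"
    using assms by (simp add: admissible_def)
  from this[unfolded convex_ereal_def, rule_format, of "1/2" u "- u"]
  have "J ((1 - 1/2) *\<^sub>R u + (1/2) *\<^sub>R (- u)) \<le> ereal (1 - 1/2) * J u + ereal (1/2) * J (- u)"
    by simp
  moreover have "J (- u) = J u"
    using admissible_scaleR[OF assms, of "-1" u] by simp
  ultimately have "0 \<le> ereal (1/2) * J u + ereal (1/2) * J u"
    using admissible_zero[OF assms] by simp
  then show ?thesis
    using admissible_not_MInf[OF assms, of u] by (cases "J u") auto
qed

lemma lsc_ereal_tendsto_le:
  assumes "lsc_ereal J" and "z \<longlonglongrightarrow> x" and "g \<longlonglongrightarrow> c" and "\<And>n. J (z n) \<le> ereal (g n)"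
  shows "J x \<le> ereal c"
proof (rule ereal_le_epsilon2)
  fix e :: real
  assume "0 < e"
  then have "\<forall>\<^sub>F n in sequentially. g n < c + e"
    using assms(3) by (intro order_tendstoD) auto
  then have "\<forall>\<^sub>F n in sequentially. z n \<in> {y. J y \<le> ereal (c + e)}"
    by eventually_elim (auto intro: order_trans[OF assms(4)])
  moreover have "closed {y. J y \<le> ereal (c + e)}"
    using assms(1) by (simp add: lsc_ereal_def)
  ultimately have "x \<in> {y. J y \<le> ereal (c + e)}"
    using Lim_in_closed_set assms(2) by (metis trivial_limit_sequentially)
  then show "J x \<le> ereal c + ereal e"
    by simp
qed

lemma subdiff_finite:
  assumes "admissible p J" and "\<zeta> \<in> subdiff J x"
  obtains j where "J x = ereal j"
proof -
  obtain v where "J v \<noteq> \<infinity>"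
    using assms(1) by (auto simp: admissible_def proper_fun_def)
  moreover have "J x + ereal (inner \<zeta> (v - x)) \<le> J v"
    using assms(2) by (simp add: subdiff_def)
  ultimately have "J x \<noteq> \<infinity>"
    by auto
  then show ?thesis
    using that admissible_not_MInf[OF assms(1), of x] by (cases "J x") auto
qed

lemma subdiff_ineq:
  "\<zeta> \<in> subdiff J x \<Longrightarrow> J x = ereal j \<Longrightarrow> J v = ereal k \<Longrightarrow> j + inner \<zeta> (v - x) \<le> k"
  by (auto simp: subdiff_def elim!: allE[of _ v])

text \<open>Euler's identity for the p-homogeneous functional: test the subgradient along the ray through x.\<close>
lemma subdiff_inner_self:
  assumes "admissible p J" and \<zeta>: "\<zeta> \<in> subdiff J x" and jx: "J x = ereal j"
  shows "inner \<zeta> x = p * j"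
proof -
  define F where "F s = s powr p * j - (s - 1) * inner \<zeta> x - j" for s
  have "F 1 \<le> F s" if "\<bar>1 - s\<bar> < 1" for s
  proof -
    have "J (s *\<^sub>R x) = ereal (s powr p * j)"
      using admissible_scaleR[OF assms(1), of s x] that jx by simp
    from subdiff_ineq[OF \<zeta> jx this] show ?thesis
      by (simp add: F_def inner_diff_right algebra_simps)
  qed
  moreover have "DERIV F 1 :> p * j - inner \<zeta> x"
    unfolding F_def by (auto intro!: derivative_eq_intros)
  ultimately have "p * j - inner \<zeta> x = 0"
    by (intro DERIV_local_min[where d = 1]) auto
  then show ?thesis
    by simp
qed

lemma subdiff_orthogonal_nullspace:
  assumes "admissible p J" and \<zeta>: "\<zeta> \<in> subdiff J x" and n: "n \<in> nullspace J"
  shows "inner \<zeta> n = 0"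
proof (rule ccontr)
  assume "inner \<zeta> n \<noteq> 0"
  obtain j where jx: "J x = ereal j"
    using subdiff_finite[OF assms(1) \<zeta>] .
  define s where "s = (inner \<zeta> x - j + 1) / inner \<zeta> n"
  have "J (s *\<^sub>R n) = ereal 0"
    using n admissible_zero[OF assms(1)] admissible_scaleR[OF assms(1), of s n]
    by (cases "s = 0") (auto simp: nullspace_def)
  from subdiff_ineq[OF \<zeta> jx this] \<open>inner \<zeta> n \<noteq> 0\<close> show False
    by (simp add: s_def inner_diff_right)
qed

lemma subdiff_monotone:
  assumes "admissible p J" and \<zeta>: "\<zeta> \<in> subdiff J x" and \<eta>: "\<eta> \<in> subdiff J y"
  shows "0 \<le> inner (\<zeta> - \<eta>) (x - y)"
proof -
  obtain j k where jx: "J x = ereal j" and jy: "J y = ereal k"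
    using subdiff_finite[OF assms(1) \<zeta>] subdiff_finite[OF assms(1) \<eta>] by metis
  show ?thesis
    using subdiff_ineq[OF \<zeta> jx jy] subdiff_ineq[OF \<eta> jy jx]
    by (simp add: inner_diff_right inner_diff_left algebra_simps)
qed

lemma subdiff_scaleR:
  assumes "admissible p J" and \<zeta>: "\<zeta> \<in> subdiff J x" and "c > 0"
  shows "(c powr (p - 1)) *\<^sub>R \<zeta> \<in> subdiff J (c *\<^sub>R x)"
  unfolding subdiff_def
proof (intro CollectI allI)
  fix v
  obtain j where jx: "J x = ereal j"
    using subdiff_finite[OF assms(1) \<zeta>] .
  have jcx: "J (c *\<^sub>R x) = ereal (c powr p * j)"
    using admissible_scaleR[OF assms(1), of c x] \<open>c > 0\<close> jx by simp
  have jv: "J v = ereal (c powr p) * J ((1/c) *\<^sub>R v)"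
    using admissible_scaleR[OF assms(1), of c "(1/c) *\<^sub>R v"] \<open>c > 0\<close> by simp
  have shift: "c powr p * inner \<zeta> ((1/c) *\<^sub>R v - x) = c powr (p - 1) * inner \<zeta> (v - c *\<^sub>R x)"
  proof -
    have "(1/c) *\<^sub>R v - x = (1/c) *\<^sub>R (v - c *\<^sub>R x)"
      using \<open>c > 0\<close> by (simp add: algebra_simps)
    then show ?thesis
      using \<open>c > 0\<close> by (simp add: powr_diff)
  qed
  show "J (c *\<^sub>R x) + ereal (inner ((c powr (p - 1)) *\<^sub>R \<zeta>) (v - c *\<^sub>R x)) \<le> J v"
  proof (cases "J ((1/c) *\<^sub>R v)")
    case (real k)
    have "c powr p * (j + inner \<zeta> ((1/c) *\<^sub>R v - x)) \<le> c powr p * k"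
      using subdiff_ineq[OF \<zeta> jx real] by (intro mult_left_mono) auto
    then show ?thesis
      using jcx jv real shift by (simp add: algebra_simps)
  qed (use jv \<open>c > 0\<close> admissible_not_MInf[OF assms(1)] in auto)
qed

lemma H0_scaleR: "x \<in> H0 J \<Longrightarrow> c \<noteq> 0 \<Longrightarrow> c *\<^sub>R x \<in> H0 J"
  by (simp add: H0_def)

lemma rayleigh_real: "J x = ereal j \<Longrightarrow> x \<noteq> 0 \<Longrightarrow> rayleigh p J x = ereal (p * j / norm x powr p)"
  by (simp add: rayleigh_def)

lemma lambda1_le_rayleigh: "x \<in> H0 J \<Longrightarrow> lambda1 p J \<le> rayleigh p J x"
  unfolding lambda1_def by (rule INF_lower)

lemma lambda1_norm_powr_le:
  assumes "admissible p J" and "0 < p" and l: "lambda1 p J = ereal l"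
    and x: "\<forall>n\<in>nullspace J. inner x n = 0" and jx: "J x = ereal j"
  shows "l * norm x powr p \<le> p * j"
proof (cases "x = 0")
  case True
  then show ?thesis
    using jx admissible_zero[OF assms(1)] by (simp add: zero_ereal_def)
next
  case False
  then have "x \<in> H0 J"
    using x by (auto simp: H0_def inner_commute)
  from lambda1_le_rayleigh[where p = p, OF this] have "l \<le> p * j / norm x powr p"
    using l rayleigh_real[where J = J and x = x and p = p, OF jx False] by simp
  then show ?thesis
    using False by (simp add: field_simps)
qed

lemma ground_state_energy:
  assumes "0 < p" and l: "lambda1 p J = ereal l" and "ground_state p J w"
  shows "J w = ereal (l * norm w powr p / p)"
proof -
  have "w \<noteq> 0" and ray: "rayleigh p J w = ereal l"
    using assms by (auto simp: ground_state_def H0_def)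
  then obtain j where jw: "J w = ereal j"
    using \<open>0 < p\<close> by (cases "J w") (auto simp: rayleigh_def)
  with ray rayleigh_real[where J = J and x = w and p = p, OF jw \<open>w \<noteq> 0\<close>] \<open>w \<noteq> 0\<close> \<open>0 < p\<close> show ?thesis
    by (simp add: field_simps)
qed

lemma powr_tangent_le:
  fixes r \<sigma> p :: real
  assumes "0 < \<sigma>" and "1 \<le> p"
  shows "\<sigma> powr p + p * \<sigma> powr (p - 1) * (r - \<sigma>) \<le> \<bar>r\<bar> powr p"
proof -
  have \<sigma>p: "\<sigma> powr (p - 1) * \<sigma> = \<sigma> powr p"
    using assms by (simp add: powr_diff)
  show ?thesis
  proof (cases "r \<le> 0")
    case True
    have "p * \<sigma> powr (p - 1) * r \<le> 0"
      using True assms by (simp add: mult_nonneg_nonpos)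
    then have "\<sigma> powr p + p * \<sigma> powr (p - 1) * (r - \<sigma>) \<le> (1 - p) * \<sigma> powr p"
      using \<sigma>p by (simp add: algebra_simps)
    also have "\<dots> \<le> 0"
      using assms by (simp add: mult_nonpos_nonneg)
    finally show ?thesis
      by (smt (verit) powr_ge_zero)
  next
    case False
    have "(r powr p) powr (1/p) * (\<sigma> powr p) powr (1 - 1/p) \<le> (1/p) * r powr p + (1 - 1/p) * \<sigma> powr p"
      using assms False by (intro Youngs_inequality_0) auto
    moreover have "p * (1 - 1/p) = p - 1"
      using assms by (simp add: field_simps)
    then have "(r powr p) powr (1/p) = r" and "(\<sigma> powr p) powr (1 - 1/p) = \<sigma> powr (p - 1)"
      using assms False by (simp_all add: powr_powr)
    ultimately have "p * (r * \<sigma> powr (p - 1)) \<le> p * ((1/p) * r powr p + (1 - 1/p) * \<sigma> powr p)"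
      using assms by (intro mult_left_mono) auto
    with False \<sigma>p assms show ?thesis
      by (simp add: algebra_simps)
  qed
qed

text \<open>A ground state w makes \<open>l c\<^sup>p\<^sup>-\<^sup>1 \<parallel>w\<parallel>\<^sup>p\<^sup>-\<^sup>2 w\<close> behave like a subgradient at c w, as long as
  the other point x is orthogonal to the null space: combine the tangent line of \<open>\<bar>r\<bar>\<^sup>p\<close> at
  \<open>c \<parallel>w\<parallel>\<close> with \<open>\<lambda>\<^sub>1 \<parallel>x\<parallel>\<^sup>p \<le> p J(x)\<close>, evaluated at the component r of x along w.\<close>
lemma ground_state_monotone:
  assumes adm: "admissible p J" and "1 \<le> p" and l: "lambda1 p J = ereal l" and "0 \<le> l"
    and gs: "ground_state p J w" and \<zeta>: "\<zeta> \<in> subdiff J x"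
    and x: "\<forall>n\<in>nullspace J. inner x n = 0" and "0 < c"
  shows "0 \<le> inner (\<zeta> - (l * c powr (p - 1) * norm w powr (p - 2)) *\<^sub>R w) (x - c *\<^sub>R w)"
proof -
  define W where "W = norm w"
  have "0 < W"
    using gs by (auto simp: W_def ground_state_def H0_def)
  obtain j where jx: "J x = ereal j"
    using subdiff_finite[OF adm \<zeta>] .
  define \<sigma> where "\<sigma> = c * W"
  define r where "r = inner w x / W"
  define \<eta> where "\<eta> = (l * c powr (p - 1) * W powr (p - 2)) *\<^sub>R w"
  have jcw: "J (c *\<^sub>R w) = ereal (c powr p * (l * W powr p / p))"
    using ground_state_energy[OF _ l gs] admissible_scaleR[OF adm, of c w] \<open>1 \<le> p\<close> \<open>0 < c\<close>
    by (simp add: W_def)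
  have "c powr p * W powr p = \<sigma> powr p"
    using \<open>0 < c\<close> \<open>0 < W\<close> by (simp add: \<sigma>_def powr_mult)
  then have sub: "p * j - l * \<sigma> powr p \<le> p * inner \<zeta> (x - c *\<^sub>R w)"
    using subdiff_ineq[OF \<zeta> jx jcw] \<open>1 \<le> p\<close> by (simp add: inner_diff_right field_simps)
  have "\<bar>r\<bar> \<le> norm x"
    using Cauchy_Schwarz_ineq2[of w x] \<open>0 < W\<close> by (simp add: r_def W_def abs_div divide_le_eq mult.commute)
  then have rayleigh: "l * \<bar>r\<bar> powr p \<le> p * j"
    using lambda1_norm_powr_le[OF adm _ l x jx] \<open>1 \<le> p\<close> \<open>0 \<le> l\<close>
    by (smt (verit) abs_ge_zero mult_left_mono powr_mono2)
  have tangent: "l * \<sigma> powr p + p * (l * \<sigma> powr (p - 1) * (r - \<sigma>)) \<le> l * \<bar>r\<bar> powr p"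
    using mult_left_mono[OF powr_tangent_le[of \<sigma> p r] \<open>0 \<le> l\<close>] \<open>0 < c\<close> \<open>0 < W\<close> \<open>1 \<le> p\<close>
    by (simp add: \<sigma>_def algebra_simps)
  have "inner \<eta> (x - c *\<^sub>R w) = l * c powr (p - 1) * (W powr (p - 2) * (inner w x - c * W\<^sup>2))"
    by (simp add: \<eta>_def W_def inner_diff_right power2_norm_eq_inner algebra_simps)
  also have "W powr (p - 2) * (inner w x - c * W\<^sup>2) = W powr (p - 1) * (r - \<sigma>)"
    using \<open>0 < W\<close> by (simp add: r_def \<sigma>_def powr_diff power2_eq_square field_simps)
  also have "l * c powr (p - 1) * (W powr (p - 1) * (r - \<sigma>)) = l * \<sigma> powr (p - 1) * (r - \<sigma>)"
    using \<open>0 < c\<close> \<open>0 < W\<close> by (simp add: \<sigma>_def powr_mult)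
  finally have "p * inner \<eta> (x - c *\<^sub>R w) \<le> p * inner \<zeta> (x - c *\<^sub>R w)"
    using sub rayleigh tangent by simp
  then show ?thesis
    using \<open>1 \<le> p\<close> by (simp add: \<eta>_def W_def inner_diff_left)
qed

section \<open>Extinguishing subgradient flows\<close>

lemma extinction_time_eqI:
  assumes "0 < S" and "\<And>t. 0 \<le> t \<Longrightarrow> u t = 0 \<longleftrightarrow> S \<le> t"
  shows "extinction_time u = S"
  unfolding extinction_time_def
proof (rule cInf_eq_minimum)
  show "S \<in> {T. T > 0 \<and> (\<forall>t\<ge>T. u t = 0)}"
    using assms by auto
  show "S \<le> T" if "T \<in> {T. T > 0 \<and> (\<forall>t\<ge>T. u t = 0)}" for T
    using that assms(2)[of T] by auto
qed

lemma has_vector_derivative_rescaled: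
  assumes "(f has_vector_derivative f') (at (t\<^sub>0 + b * \<tau>) within {t\<^sub>0 + b * \<tau>..})" and "0 < b"
  shows "((\<lambda>\<tau>. c *\<^sub>R f (t\<^sub>0 + b * \<tau>)) has_vector_derivative (c * b) *\<^sub>R f') (at \<tau> within {\<tau>..})"
proof -
  have "((\<lambda>\<tau>. t\<^sub>0 + b * \<tau>) has_vector_derivative b) (at \<tau> within {\<tau>..})"
    using has_real_derivative_iff_has_vector_derivative by (auto intro!: derivative_eq_intros)
  moreover have "(f has_vector_derivative f') (at (t\<^sub>0 + b * \<tau>) within (\<lambda>\<tau>. t\<^sub>0 + b * \<tau>) ` {\<tau>..})"
    using \<open>0 < b\<close> by (intro has_vector_derivative_within_subset[OF assms(1)]) auto
  ultimately have "((\<lambda>\<tau>. f (t\<^sub>0 + b * \<tau>)) has_vector_derivative b *\<^sub>R f') (at \<tau> within {\<tau>..})"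
    using vector_diff_chain_within by (force simp: o_def)
  from bounded_linear.has_vector_derivative[OF bounded_linear_scaleR_right this, of c]
  show ?thesis
    by simp
qed

lemma rescaling_factor_powr:
  fixes b p :: real
  assumes "0 < b" and "p < 2"
  shows "(1 / b powr (1 / (2 - p))) * b = (1 / b powr (1 / (2 - p))) powr (p - 1)"
proof -
  define q where "q = 1 / (2 - p)"
  have "- q * (p - 1) = - q + 1"
    using \<open>p < 2\<close> by (simp add: q_def field_simps)
  moreover have "b powr (- q) * b = b powr (- q + 1)"
    using \<open>0 < b\<close> by (subst powr_add) simp
  ultimately show ?thesis
    by (simp add: q_def powr_minus_divide[symmetric] powr_powr)
qed

text \<open>With this S the velocity of the separable solution through w is exactly the vector that
  \<open>ground_state_monotone\<close> pairs monotonically with the flow.\<close>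
lemma separable_solution_has_vector_derivative:
  fixes w :: "'a::real_normed_vector"
  assumes "p < 2" and "0 < l" and "w \<noteq> 0" and S: "S = norm w powr (2 - p) / ((2 - p) * l)"
    and "\<tau> < S"
  shows "((\<lambda>\<tau>. (1 - \<tau> / S) powr (1 / (2 - p)) *\<^sub>R w) has_vector_derivative
      - ((l * ((1 - \<tau> / S) powr (1 / (2 - p))) powr (p - 1) * norm w powr (p - 2)) *\<^sub>R w)) (at \<tau> within T)"
proof -
  define q where "q = 1 / (2 - p)"
  define X where "X = 1 - \<tau> / S"
  have "0 < S"
    using assms by simp
  then have "0 < X"
    using \<open>\<tau> < S\<close> by (simp add: X_def field_simps)
  have "((\<lambda>\<tau>. (1 - \<tau> / S) powr q) has_real_derivative q * X powr (q - 1) * (- 1 / S)) (at \<tau> within T)"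
    unfolding X_def using \<open>0 < X\<close>[unfolded X_def] \<open>0 < S\<close>
    by (intro DERIV_chain2[OF has_real_derivative_powr]) (auto intro!: derivative_eq_intros)
  from has_vector_derivative_scaleR[OF this has_vector_derivative_const[of w]]
  have "((\<lambda>\<tau>. (1 - \<tau> / S) powr q *\<^sub>R w) has_vector_derivative
      - ((q / S * X powr (q - 1)) *\<^sub>R w)) (at \<tau> within T)"
    by simp
  moreover have "q / S = l * norm w powr (p - 2)"
    using assms by (simp add: q_def powr_minus_divide[symmetric] powr_diff)
  moreover have "q * (p - 1) = q - 1"
    using \<open>p < 2\<close> by (simp add: q_def field_simps)
  then have "(X powr q) powr (p - 1) = X powr (q - 1)"
    by (simp add: powr_powr)
  ultimately show ?thesis
    unfolding q_def[symmetric] X_def[symmetric] by (simp add: mult_ac)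
qed

text \<open>Only the subgradient inclusion for the right derivative of a gradient flow is used, which
  makes the rescaled flows below instances of the same locale.\<close>
locale extinguishing_flow =
  fixes J :: "'a::{real_inner,complete_space} \<Rightarrow> ereal" and p :: real and u :: "real \<Rightarrow> 'a"
  assumes p_ge: "1 \<le> p" and p_less: "p < 2" and admissible: "admissible p J"
    and lambda1_pos: "0 < lambda1 p J"
    and continuous: "continuous_on {0..} u"
    and subgradient: "\<And>t. 0 < t \<Longrightarrow> \<exists>\<zeta>\<in>subdiff J (u t). (u has_vector_derivative - \<zeta>) (at t within {t..})"
    and initial: "u 0 \<in> H0 J"
    and extinguishes: "\<exists>T>0. \<forall>t\<ge>T. u t = 0"
begin

abbreviation Tex where "Tex \<equiv> extinction_time u"

lemma continuous_on_Icc: "0 \<le> a \<Longrightarrow> continuous_on {a..b} u"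
  using continuous by (rule continuous_on_subset) auto

lemma orthogonal_nullspace:
  assumes "0 \<le> t" and n: "n \<in> nullspace J"
  shows "inner (u t) n = 0"
proof -
  have "inner (u t) n = inner (u 0) n"
  proof (rule DERIV_right_zero_imp_constant[OF \<open>0 \<le> t\<close>])
    show "continuous_on {0..t} (\<lambda>s. inner (u s) n)"
      using continuous_on_Icc[of 0 t] by (intro continuous_intros) auto
    fix s :: real
    assume "0 < s"
    then obtain \<zeta> where \<zeta>: "\<zeta> \<in> subdiff J (u s)" and du: "(u has_vector_derivative - \<zeta>) (at s within {s..})"
      using subgradient by blast
    have "inner \<zeta> n = 0"
      using subdiff_orthogonal_nullspace[OF admissible \<zeta> n] .
    with has_derivative_inner_left[OF du[unfolded has_vector_derivative_def], of n]
    have "((\<lambda>s. inner (u s) n) has_derivative (\<lambda>h. 0)) (at s within {s..})"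
      by simp
    then show "((\<lambda>s. inner (u s) n) has_real_derivative 0) (at s within {s..})"
      by (simp add: has_field_derivative_def lambda_zero)
  qed
  with initial n show ?thesis
    by (simp add: H0_def)
qed

lemma norm_decreasing:
  assumes "0 \<le> s" and "s \<le> t"
  shows "norm (u t) \<le> norm (u s)"
proof -
  have "norm (u t - 0) \<le> norm (u s - 0)"
  proof (rule norm_diff_decreasing_if_monotone[OF \<open>s \<le> t\<close> continuous_on_Icc[OF \<open>0 \<le> s\<close>]])
    fix r assume "s < r" "r < t"
    with \<open>0 \<le> s\<close> have "0 < r"
      by linarith
    then obtain \<zeta> where \<zeta>: "\<zeta> \<in> subdiff J (u r)" and du: "(u has_vector_derivative - \<zeta>) (at r within {r..})"
      using subgradient by blast
    obtain j where j: "J (u r) = ereal j"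
      using subdiff_finite[OF admissible \<zeta>] .
    then have "0 \<le> j"
      using admissible_nonneg[OF admissible, of "u r"] by simp
    then have "0 \<le> inner (\<zeta> - 0) (u r - 0)"
      using subdiff_inner_self[OF admissible \<zeta> j] p_ge by simp
    moreover have "((\<lambda>_. 0) has_vector_derivative - 0) (at r within {r..})"
      using has_vector_derivative_const by simp
    ultimately show "\<exists>\<xi> \<eta>. (u has_vector_derivative - \<xi>) (at r within {r..})
        \<and> ((\<lambda>_. 0) has_vector_derivative - \<eta>) (at r within {r..}) \<and> 0 \<le> inner (\<xi> - \<eta>) (u r - 0)"
      using du by blast
  qed simp
  then show ?thesis
    by simp
qed

lemma vanishes_after_extinction:
  assumes "Tex \<le> t"
  shows "u t = 0"
proof -
  define S where "S = {T. T > 0 \<and> (\<forall>t\<ge>T. u t = 0)}"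
  have "S \<noteq> {}" and "bdd_below S"
    using extinguishes by (auto simp: S_def intro: bdd_belowI[of _ 0])
  have "{Tex<..} \<subseteq> {s \<in> {0..}. u s = 0}"
  proof
    fix s assume "s \<in> {Tex<..}"
    then obtain T where "T \<in> S" "T < s"
      using cInf_less_iff[OF \<open>S \<noteq> {}\<close> \<open>bdd_below S\<close>] by (auto simp: S_def extinction_time_def)
    then show "s \<in> {s \<in> {0..}. u s = 0}"
      by (auto simp: S_def)
  qed
  moreover have "closed {s \<in> {0..}. u s = 0}"
    by (rule continuous_closed_preimage_constant[OF continuous]) auto
  ultimately have "closure {Tex<..} \<subseteq> {s \<in> {0..}. u s = 0}"
    by (rule closure_minimal)
  with assms show ?thesis
    by auto
qed

lemma extinction_time_pos: "0 < Tex"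
proof -
  have "0 \<le> Tex"
    unfolding extinction_time_def using extinguishes by (intro cInf_greatest) auto
  moreover have "u 0 \<noteq> 0"
    using initial by (simp add: H0_def)
  ultimately show ?thesis
    using vanishes_after_extinction[of 0] by fastforce
qed

lemma vanishes_iff:
  assumes "0 \<le> t"
  shows "u t = 0 \<longleftrightarrow> Tex \<le> t"
proof
  assume "u t = 0"
  have "u s = 0" if "t \<le> s" for s
    using norm_decreasing[OF assms that] \<open>u t = 0\<close> by simp
  moreover have "t \<noteq> 0"
    using \<open>u t = 0\<close> initial by (auto simp: H0_def)
  ultimately show "Tex \<le> t"
    unfolding extinction_time_def using assms by (intro cInf_lower) (auto intro: bdd_belowI[of _ 0])
qed (rule vanishes_after_extinction)

lemma in_H0: "0 \<le> t \<Longrightarrow> t < Tex \<Longrightarrow> u t \<in> H0 J"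
  using orthogonal_nullspace vanishes_iff by (auto simp: H0_def inner_commute)

definition lam1 :: real where "lam1 = real_of_ereal (lambda1 p J)"

lemma lambda1_real: "lambda1 p J = ereal lam1" and lam1_pos: "0 < lam1"
proof -
  have "0 < Tex / 2" "Tex / 2 < Tex"
    using extinction_time_pos by auto
  then obtain \<zeta> where "\<zeta> \<in> subdiff J (u (Tex / 2))"
    using subgradient by blast
  then obtain j where j: "J (u (Tex / 2)) = ereal j"
    using subdiff_finite[OF admissible] by blast
  have "u (Tex / 2) \<in> H0 J"
    using in_H0 \<open>Tex / 2 < Tex\<close> \<open>0 < Tex / 2\<close> by simp
  then have "lambda1 p J \<le> ereal (p * j / norm (u (Tex / 2)) powr p)"
    using lambda1_le_rayleigh[of "u (Tex / 2)" J p] rayleigh_real[where J = J and p = p, OF j]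
    by (simp add: H0_def)
  then have "lambda1 p J \<noteq> \<infinity>" and "lambda1 p J \<noteq> -\<infinity>"
    using lambda1_pos by auto
  then show "lambda1 p J = ereal lam1"
    by (cases "lambda1 p J") (auto simp: lam1_def)
  with lambda1_pos show "0 < lam1"
    by simp
qed

lemma norm_powr_energy_decreasing:
  assumes "0 \<le> t" "t \<le> s" "s \<le> Tex"
    and L: "\<And>r. t < r \<Longrightarrow> r < s \<Longrightarrow> ereal L \<le> rayleigh p J (u r)"
  shows "norm (u s) powr (2 - p) + (2 - p) * L * s \<le> norm (u t) powr (2 - p) + (2 - p) * L * t"
proof (rule DERIV_right_nonpos_imp_decreasing[OF \<open>t \<le> s\<close>])
  show "continuous_on {t..s} (\<lambda>r. norm (u r) powr (2 - p) + (2 - p) * L * r)"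
    using continuous_on_Icc[OF \<open>0 \<le> t\<close>] p_less by (intro continuous_on_powr' continuous_intros) auto
  fix r assume "t < r" "r < s"
  then have "0 < r" "u r \<noteq> 0"
    using assms vanishes_iff[of r] by auto
  then obtain \<zeta> where \<zeta>: "\<zeta> \<in> subdiff J (u r)" and du: "(u has_vector_derivative - \<zeta>) (at r within {r..})"
    using subgradient by blast
  obtain j where j: "J (u r) = ereal j"
    using subdiff_finite[OF admissible \<zeta>] .
  define N where "N = norm (u r)"
  have "0 < N"
    using \<open>u r \<noteq> 0\<close> by (simp add: N_def)
  have "L \<le> p * j / N powr p"
    using L[OF \<open>t < r\<close> \<open>r < s\<close>] rayleigh_real[where J = J and x = "u r" and p = p, OF j \<open>u r \<noteq> 0\<close>] by (simp add: N_def)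
  then have le: "(2 - p) * L \<le> (2 - p) * (p * j / N powr p)"
    using p_less by (intro mult_left_mono) auto
  have "(2 - p) * N powr (2 - p - 2) * inner (u r) (- \<zeta>) = - (2 - p) * (p * j / N powr p)"
    using subdiff_inner_self[OF admissible \<zeta> j] \<open>0 < N\<close>
    by (simp add: N_def inner_commute powr_minus_divide field_simps)
  with has_vector_derivative_norm_powr[OF du \<open>u r \<noteq> 0\<close>, of "2 - p"]
  have "((\<lambda>r. norm (u r) powr (2 - p)) has_real_derivative - (2 - p) * (p * j / N powr p)) (at r within {r..})"
    by (simp add: N_def)
  then have "((\<lambda>r. norm (u r) powr (2 - p) + (2 - p) * L * r) has_real_derivative
      - (2 - p) * (p * j / N powr p) + (2 - p) * L) (at r within {r..})"
    by (intro DERIV_add) (auto intro!: derivative_eq_intros)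
  with le show "\<exists>D. ((\<lambda>r. norm (u r) powr (2 - p) + (2 - p) * L * r) has_real_derivative D) (at r within {r..})
      \<and> D \<le> 0"
    by (intro exI[of _ "- (2 - p) * (p * j / N powr p) + (2 - p) * L"] conjI) (assumption, linarith)
qed

lemma norm_powr_lower_bound:
  assumes "0 \<le> t" "t \<le> s" "s \<le> Tex"
    and "\<And>r. t < r \<Longrightarrow> r < s \<Longrightarrow> ereal L \<le> rayleigh p J (u r)"
  shows "(2 - p) * (L * (s - t) + lam1 * (Tex - s)) \<le> norm (u t) powr (2 - p)"
proof -
  have "norm (u Tex) powr (2 - p) + (2 - p) * lam1 * Tex \<le> norm (u s) powr (2 - p) + (2 - p) * lam1 * s"
  proof (rule norm_powr_energy_decreasing)
    fix r assume "s < r" "r < Tex"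
    then show "ereal lam1 \<le> rayleigh p J (u r)"
      using lambda1_le_rayleigh in_H0 assms lambda1_real by (metis less_eq_real_def order.trans)
  qed (use assms in auto)
  moreover have "u Tex = 0"
    by (simp add: vanishes_after_extinction)
  ultimately show ?thesis
    using norm_powr_energy_decreasing[OF assms] by (simp add: algebra_simps)
qed

lemma exists_low_rayleigh:
  assumes "0 < \<delta>" and "\<delta> \<le> Tex"
    and "norm (u 0) powr (2 - p) < (2 - p) * (L * \<delta> + lam1 * (Tex - \<delta>))"
  shows "\<exists>\<tau>. 0 < \<tau> \<and> \<tau> < \<delta> \<and> J (u \<tau>) \<le> ereal (L * norm (u \<tau>) powr p / p)"
proof -
  obtain \<tau> where \<tau>: "0 < \<tau>" "\<tau> < \<delta>" and "\<not> ereal L \<le> rayleigh p J (u \<tau>)"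
    using norm_powr_lower_bound[of 0 \<delta> L] assms by fastforce
  moreover obtain \<zeta> where "\<zeta> \<in> subdiff J (u \<tau>)"
    using subgradient \<open>0 < \<tau>\<close> by blast
  then obtain j where j: "J (u \<tau>) = ereal j"
    using subdiff_finite[OF admissible] by blast
  moreover have "u \<tau> \<noteq> 0"
    using vanishes_iff[of \<tau>] \<tau> \<open>\<delta> \<le> Tex\<close> by simp
  ultimately have "p * j / norm (u \<tau>) powr p < L"
    using rayleigh_real[where J = J and x = "u \<tau>" and p = p, OF j] by simp
  then show ?thesis
    using \<tau> j \<open>u \<tau> \<noteq> 0\<close> p_ge by (intro exI[of _ \<tau>]) (simp add: field_simps)
qed

lemma rescaled_extinguishing_flow:
  assumes "0 \<le> t\<^sub>0" and "t\<^sub>0 < Tex" and "0 < b"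
  shows "extinguishing_flow J p (\<lambda>\<tau>. (1 / b powr (1 / (2 - p))) *\<^sub>R u (t\<^sub>0 + b * \<tau>))"
proof -
  define c where "c = 1 / b powr (1 / (2 - p))"
  have "0 < c"
    using \<open>0 < b\<close> by (simp add: c_def)
  have cb: "c * b = c powr (p - 1)"
    unfolding c_def using \<open>0 < b\<close> p_less by (rule rescaling_factor_powr)
  show ?thesis
    unfolding c_def[symmetric]
  proof unfold_locales
    have "continuous_on {0..} (u \<circ> (\<lambda>\<tau>. t\<^sub>0 + b * \<tau>))"
      using \<open>0 \<le> t\<^sub>0\<close> \<open>0 < b\<close>
      by (intro continuous_on_compose continuous_intros continuous_on_subset[OF continuous]) auto
    then show "continuous_on {0..} (\<lambda>\<tau>. c *\<^sub>R u (t\<^sub>0 + b * \<tau>))"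
      by (intro continuous_intros) (simp add: o_def)
  next
    fix \<tau> :: real
    assume "0 < \<tau>"
    then have "0 < t\<^sub>0 + b * \<tau>"
      using \<open>0 \<le> t\<^sub>0\<close> \<open>0 < b\<close> by (simp add: add_nonneg_pos)
    then obtain \<zeta> where \<zeta>: "\<zeta> \<in> subdiff J (u (t\<^sub>0 + b * \<tau>))"
      and du: "(u has_vector_derivative - \<zeta>) (at (t\<^sub>0 + b * \<tau>) within {t\<^sub>0 + b * \<tau>..})"
      using subgradient by blast
    have "((\<lambda>\<tau>. c *\<^sub>R u (t\<^sub>0 + b * \<tau>)) has_vector_derivative - (c powr (p - 1) *\<^sub>R \<zeta>)) (at \<tau> within {\<tau>..})"
      using has_vector_derivative_rescaled[OF du \<open>0 < b\<close>, of c] by (simp add: cb)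
    moreover have "c powr (p - 1) *\<^sub>R \<zeta> \<in> subdiff J (c *\<^sub>R u (t\<^sub>0 + b * \<tau>))"
      using subdiff_scaleR[OF admissible \<zeta> \<open>0 < c\<close>] .
    ultimately show "\<exists>\<zeta>\<in>subdiff J (c *\<^sub>R u (t\<^sub>0 + b * \<tau>)).
        ((\<lambda>\<tau>. c *\<^sub>R u (t\<^sub>0 + b * \<tau>)) has_vector_derivative - \<zeta>) (at \<tau> within {\<tau>..})"
      by blast
  next
    show "c *\<^sub>R u (t\<^sub>0 + b * 0) \<in> H0 J"
      using in_H0[OF assms(1,2)] \<open>0 < c\<close> by (simp add: H0_scaleR)
  next
    have "u (t\<^sub>0 + b * \<tau>) = 0" if "(Tex - t\<^sub>0) / b \<le> \<tau>" for \<tau>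
      using that \<open>0 < b\<close> by (intro vanishes_after_extinction) (simp add: field_simps)
    then show "\<exists>T>0. \<forall>\<tau>\<ge>T. c *\<^sub>R u (t\<^sub>0 + b * \<tau>) = 0"
      using assms by (intro exI[of _ "(Tex - t\<^sub>0) / b"]) auto
  qed (use p_ge p_less admissible lambda1_pos in auto)
qed

lemma extinction_time_rescaled:
  assumes "0 \<le> t\<^sub>0" and "t\<^sub>0 < Tex" and "0 < b"
  shows "extinction_time (\<lambda>\<tau>. (1 / b powr (1 / (2 - p))) *\<^sub>R u (t\<^sub>0 + b * \<tau>)) = (Tex - t\<^sub>0) / b"
proof (rule extinction_time_eqI)
  show "0 < (Tex - t\<^sub>0) / b"
    using assms by simp
  fix \<tau> :: real
  assume "0 \<le> \<tau>"
  then have "u (t\<^sub>0 + b * \<tau>) = 0 \<longleftrightarrow> Tex \<le> t\<^sub>0 + b * \<tau>"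
    using assms by (intro vanishes_iff) simp
  then show "(1 / b powr (1 / (2 - p))) *\<^sub>R u (t\<^sub>0 + b * \<tau>) = 0 \<longleftrightarrow> (Tex - t\<^sub>0) / b \<le> \<tau>"
    using \<open>0 < b\<close> by (simp add: field_simps)
qed

lemma norm_diff_ground_state_solution_le:
  assumes gs: "ground_state p J w" and S: "S = norm w powr (2 - p) / ((2 - p) * lam1)"
    and "0 \<le> t" and "t < S"
  shows "norm (u t - (1 - t / S) powr (1 / (2 - p)) *\<^sub>R w) \<le> norm (u 0 - w)"
proof -
  define c where "c \<tau> = (1 - \<tau> / S) powr (1 / (2 - p))" for \<tau>
  have "w \<noteq> 0"
    using gs by (auto simp: ground_state_def H0_def)
  then have "0 < S"
    using S p_less lam1_pos by simp
  have "norm (u t - c t *\<^sub>R w) \<le> norm (u 0 - c 0 *\<^sub>R w)"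
  proof (rule norm_diff_decreasing_if_monotone[OF \<open>0 \<le> t\<close> continuous_on_Icc[OF order_refl]])
    show "continuous_on {0..t} (\<lambda>\<tau>. c \<tau> *\<^sub>R w)"
      unfolding c_def using \<open>t < S\<close> \<open>0 < S\<close>
      by (intro continuous_intros continuous_on_powr') (auto simp: field_simps)
    fix \<tau> :: real
    assume "0 < \<tau>" "\<tau> < t"
    then obtain \<zeta> where \<zeta>: "\<zeta> \<in> subdiff J (u \<tau>)" and du: "(u has_vector_derivative - \<zeta>) (at \<tau> within {\<tau>..})"
      using subgradient by blast
    have "0 < c \<tau>"
      using \<open>\<tau> < t\<close> \<open>t < S\<close> \<open>0 < S\<close> by (simp add: c_def field_simps)
    then have mono: "0 \<le> inner (\<zeta> - (lam1 * c \<tau> powr (p - 1) * norm w powr (p - 2)) *\<^sub>R w) (u \<tau> - c \<tau> *\<^sub>R w)"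
      using lam1_pos orthogonal_nullspace \<open>0 < \<tau>\<close>
      by (intro ground_state_monotone[OF admissible p_ge lambda1_real _ gs \<zeta>]) auto
    have dc: "((\<lambda>\<tau>. c \<tau> *\<^sub>R w) has_vector_derivative
        - ((lam1 * c \<tau> powr (p - 1) * norm w powr (p - 2)) *\<^sub>R w)) (at \<tau> within {\<tau>..})"
      unfolding c_def using separable_solution_has_vector_derivative[OF p_less lam1_pos \<open>w \<noteq> 0\<close> S]
        \<open>\<tau> < t\<close> \<open>t < S\<close> by simp
    show "\<exists>\<xi> \<eta>. (u has_vector_derivative - \<xi>) (at \<tau> within {\<tau>..})
        \<and> ((\<lambda>\<tau>. c \<tau> *\<^sub>R w) has_vector_derivative - \<eta>) (at \<tau> within {\<tau>..})
        \<and> 0 \<le> inner (\<xi> - \<eta>) (u \<tau> - c \<tau> *\<^sub>R w)"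
      by (rule exI[of _ \<zeta>], rule exI[of _ "(lam1 * c \<tau> powr (p - 1) * norm w powr (p - 2)) *\<^sub>R w"])
        (intro conjI du dc mono)
  qed
  then show ?thesis
    by (simp add: c_def)
qed

end

lemma extinguishing_flows_norm_diff_decreasing:
  assumes "extinguishing_flow J p u" and "extinguishing_flow J p v" and "0 \<le> t"
  shows "norm (u t - v t) \<le> norm (u 0 - v 0)"
proof -
  interpret U: extinguishing_flow J p u by fact
  interpret V: extinguishing_flow J p v by fact
  show ?thesis
  proof (rule norm_diff_decreasing_if_monotone[OF \<open>0 \<le> t\<close> U.continuous_on_Icc V.continuous_on_Icc])
    fix s :: real
    assume "0 < s"
    then obtain \<xi> \<eta> where "\<xi> \<in> subdiff J (u s)" "(u has_vector_derivative - \<xi>) (at s within {s..})"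
      and "\<eta> \<in> subdiff J (v s)" "(v has_vector_derivative - \<eta>) (at s within {s..})"
      using U.subgradient V.subgradient by metis
    then show "\<exists>\<xi> \<eta>. (u has_vector_derivative - \<xi>) (at s within {s..})
        \<and> (v has_vector_derivative - \<eta>) (at s within {s..}) \<and> 0 \<le> inner (\<xi> - \<eta>) (u s - v s)"
      using subdiff_monotone[OF U.admissible] by blast
  qed auto
qed

lemma gradient_flow_imp_extinguishing_flow:
  assumes "1 \<le> p" and "p < 2" and "admissible p J" and "0 < lambda1 p J"
    and "f \<in> H0 J" and "gradient_flow J f u" and "\<exists>T>0. \<forall>t\<ge>T. u t = 0"
  shows "extinguishing_flow J p u"
  using assms by unfold_locales (auto simp: gradient_flow_def min_norm_elem_def)

section \<open>Asymptotic profiles\<close>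

locale asymptotic_profile = extinguishing_flow +
  fixes t :: "nat \<Rightarrow> real" and w :: 'a
  assumes times: "\<And>k. 0 \<le> t k \<and> t k < extinction_time u"
    and profile: "(\<lambda>k. (1 / (1 - t k / extinction_time u) powr (1 / (2 - p))) *\<^sub>R u (t k)) \<longlonglongrightarrow> w"
begin

definition v :: "nat \<Rightarrow> real \<Rightarrow> 'a" where
  "v k \<tau> = (1 / (1 - t k / Tex) powr (1 / (2 - p))) *\<^sub>R u (t k + (1 - t k / Tex) * \<tau>)"

lemma v_flow: "extinguishing_flow J p (v k)"
  and extinction_time_v: "extinction_time (v k) = Tex"
proof -
  have b: "0 < 1 - t k / Tex"
    using times[of k] extinction_time_pos by simp
  show "extinguishing_flow J p (v k)"
    unfolding v_def[abs_def] using times[of k] b by (intro rescaled_extinguishing_flow) auto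
  have "extinction_time (v k) = (Tex - t k) / (1 - t k / Tex)"
    unfolding v_def[abs_def] using times[of k] b by (intro extinction_time_rescaled) auto
  also have "\<dots> = Tex"
    using extinction_time_pos times[of k] by (simp add: field_simps)
  finally show "extinction_time (v k) = Tex" .
qed

lemma v_initial_tendsto: "(\<lambda>k. v k 0) \<longlonglongrightarrow> w"
  using profile by (simp add: v_def)

lemma profile_lower_bound: "(2 - p) * lam1 * Tex \<le> norm w powr (2 - p)"
proof (rule LIMSEQ_le_const)
  show "(\<lambda>k. norm (v k 0) powr (2 - p)) \<longlonglongrightarrow> norm w powr (2 - p)"
    using p_less by (intro tendsto_powr' tendsto_norm v_initial_tendsto tendsto_const) auto
  show "\<exists>N. \<forall>k\<ge>N. (2 - p) * lam1 * Tex \<le> norm (v k 0) powr (2 - p)"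
  proof (intro exI allI impI)
    fix k
    interpret vk: extinguishing_flow J p "v k"
      by (rule v_flow)
    show "(2 - p) * lam1 * Tex \<le> norm (v k 0) powr (2 - p)"
      using vk.norm_powr_lower_bound[of 0 0 0] vk.extinction_time_pos
      by (simp add: extinction_time_v)
  qed
qed

lemma profile_in_H0: "w \<in> H0 J"
proof -
  have "0 < (2 - p) * lam1 * Tex"
    using p_less lam1_pos extinction_time_pos by simp
  with profile_lower_bound have "w \<noteq> 0"
    by auto
  moreover have "inner w n = 0" if "n \<in> nullspace J" for n
  proof -
    have "(\<lambda>k. inner (v k 0) n) \<longlonglongrightarrow> inner w n"
      by (intro tendsto_inner v_initial_tendsto tendsto_const)
    moreover have "inner (v k 0) n = 0" for k
      using extinguishing_flow.orthogonal_nullspace[OF v_flow order_refl that] .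
    ultimately show ?thesis
      by (simp add: LIMSEQ_const_iff)
  qed
  ultimately show ?thesis
    by (simp add: H0_def)
qed

lemma dist_v_le:
  assumes "0 \<le> \<tau>"
  shows "dist (v k \<tau>) w \<le> dist (v k 0) w + 2 * dist (v m 0) w + dist (v m \<tau>) (v m 0)"
proof -
  have "dist (v k \<tau>) (v m \<tau>) \<le> dist (v k 0) (v m 0)"
    using extinguishing_flows_norm_diff_decreasing[OF v_flow v_flow assms] by (simp add: dist_norm)
  then show ?thesis
    using dist_triangle[of "v k \<tau>" w "v m \<tau>"] dist_triangle[of "v m \<tau>" w "v m 0"]
      dist_triangle2[of "v k 0" "v m 0" w] by linarith
qed

lemma ground_state_profile_norm_le:
  assumes gs: "ground_state p J w"
  shows "norm w powr (2 - p) \<le> (2 - p) * lam1 * Tex"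
proof (rule ccontr)
  define S where "S = norm w powr (2 - p) / ((2 - p) * lam1)"
  assume "\<not> ?thesis"
  then have "Tex < S"
    using p_less lam1_pos by (simp add: S_def field_simps)
  define y where "y = (1 - Tex / S) powr (1 / (2 - p)) *\<^sub>R w"
  have "norm y \<le> norm (v k 0 - w)" for k
  proof -
    interpret vk: extinguishing_flow J p "v k"
      by (rule v_flow)
    have "v k Tex = 0"
      using vk.vanishes_after_extinction by (simp add: extinction_time_v)
    then show ?thesis
      using vk.norm_diff_ground_state_solution_le[OF gs S_def _ \<open>Tex < S\<close>] extinction_time_pos
      by (simp add: y_def)
  qed
  moreover have "(\<lambda>k. norm (v k 0 - w)) \<longlonglongrightarrow> 0"
    using v_initial_tendsto by (simp add: tendsto_norm_zero_iff LIM_zero_iff)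
  ultimately have "norm y \<le> 0"
    by (intro LIMSEQ_le_const) auto
  moreover have "w \<noteq> 0" and "0 < S"
    using profile_in_H0 \<open>Tex < S\<close> extinction_time_pos by (auto simp: H0_def)
  moreover have "0 < 1 - Tex / S"
    using \<open>Tex < S\<close> \<open>0 < S\<close> by (simp add: field_simps)
  then have "0 < (1 - Tex / S) powr (1 / (2 - p)) * norm w"
    using \<open>w \<noteq> 0\<close> by (intro mult_pos_pos) auto
  moreover have "norm y = (1 - Tex / S) powr (1 / (2 - p)) * norm w"
    by (simp add: y_def)
  ultimately show False
    by linarith
qed

lemma low_rayleigh_near_profile:
  assumes eq: "norm w powr (2 - p) = (2 - p) * lam1 * Tex" and "0 < e"
  shows "\<exists>z. dist z w < e \<and> J z \<le> ereal ((lam1 + e) * norm z powr p / p)"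
proof -
  obtain N where N: "\<And>k. N \<le> k \<Longrightarrow> dist (v k 0) w < e / 4"
    using tendstoD[OF v_initial_tendsto, of "e / 4"] \<open>0 < e\<close> by (auto simp: eventually_sequentially)
  have "\<forall>x\<in>{0..}. \<forall>\<epsilon>>0. \<exists>d>0. \<forall>x'\<in>{0..}. dist x' x < d \<longrightarrow> dist (v N x') (v N x) < \<epsilon>"
    using extinguishing_flow.continuous[OF v_flow] by (simp add: continuous_on_iff)
  then obtain d where "0 < d" and d: "\<forall>\<tau>\<in>{0..}. dist \<tau> 0 < d \<longrightarrow> dist (v N \<tau>) (v N 0) < e / 4"
    using \<open>0 < e\<close> by (metis atLeast_iff order_refl zero_less_divide_iff zero_less_numeral)
  define \<delta> where "\<delta> = min (d / 2) Tex"
  have "0 < \<delta>" "\<delta> < d" "\<delta> \<le> Tex"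
    using \<open>0 < d\<close> extinction_time_pos by (auto simp: \<delta>_def)
  define bound where "bound = (2 - p) * ((lam1 + e) * \<delta> + lam1 * (Tex - \<delta>))"
  have "(\<lambda>k. norm (v k 0) powr (2 - p)) \<longlonglongrightarrow> (2 - p) * lam1 * Tex"
    unfolding eq[symmetric] using p_less by (intro tendsto_powr' tendsto_norm v_initial_tendsto) auto
  moreover have "(2 - p) * lam1 * Tex < bound"
    using p_less \<open>0 < e\<close> \<open>0 < \<delta>\<close> by (simp add: bound_def algebra_simps)
  ultimately obtain M where M: "\<And>k. M \<le> k \<Longrightarrow> norm (v k 0) powr (2 - p) < bound"
    by (metis (no_types, lifting) order_tendstoD(2) eventually_sequentially)
  define k where "k = max N M"
  obtain \<tau> where "0 < \<tau>" "\<tau> < \<delta>" and J: "J (v k \<tau>) \<le> ereal ((lam1 + e) * norm (v k \<tau>) powr p / p)"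
    using extinguishing_flow.exists_low_rayleigh[OF v_flow[of k] \<open>0 < \<delta>\<close>, unfolded extinction_time_v,
        OF \<open>\<delta> \<le> Tex\<close> M[unfolded bound_def]] by (auto simp: k_def)
  have "dist (v N \<tau>) (v N 0) < e / 4"
    using d \<open>0 < \<tau>\<close> \<open>\<tau> < \<delta>\<close> \<open>\<delta> < d\<close> by simp
  then have "dist (v k \<tau>) w < e"
    using dist_v_le[of \<tau> k N] N[of k] N[of N] \<open>0 < \<tau>\<close> by (simp add: k_def)
  with J show ?thesis
    by blast
qed

lemma profile_energy_le:
  assumes eq: "norm w powr (2 - p) = (2 - p) * lam1 * Tex"
  shows "J w \<le> ereal (lam1 * norm w powr p / p)"
proof -
  define e where "e n = 1 / real (Suc n)" for n
  have "\<forall>n. \<exists>z. dist z w < e n \<and> J z \<le> ereal ((lam1 + e n) * norm z powr p / p)"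
    using low_rayleigh_near_profile[OF eq] by (simp add: e_def)
  then obtain z where z: "\<And>n. dist (z n) w < e n"
    and Jz: "\<And>n. J (z n) \<le> ereal ((lam1 + e n) * norm (z n) powr p / p)"
    by metis
  have "e \<longlonglongrightarrow> 0"
    unfolding e_def by (rule LIMSEQ_Suc[OF lim_inverse_n'])
  have "(\<lambda>n. dist (z n) w) \<longlonglongrightarrow> 0"
  proof (rule tendsto_sandwich[of "\<lambda>_. 0" _ _ e])
    show "\<forall>\<^sub>F n in sequentially. dist (z n) w \<le> e n"
      using z by (simp add: less_imp_le)
  qed (use \<open>e \<longlonglongrightarrow> 0\<close> in simp_all)
  then have "z \<longlonglongrightarrow> w"
    by (rule tendsto_dist_iff[THEN iffD2])
  have "0 < norm w"
    using profile_in_H0 by (simp add: H0_def)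
  have "(\<lambda>n. norm (z n) powr p) \<longlonglongrightarrow> norm w powr p"
    using \<open>0 < norm w\<close> by (intro tendsto_powr' tendsto_norm \<open>z \<longlonglongrightarrow> w\<close> tendsto_const) auto
  moreover have "(\<lambda>n. lam1 + e n) \<longlonglongrightarrow> lam1"
    using tendsto_add[OF tendsto_const \<open>e \<longlonglongrightarrow> 0\<close>] by simp
  ultimately have "(\<lambda>n. (lam1 + e n) * norm (z n) powr p / p) \<longlonglongrightarrow> lam1 * norm w powr p / p"
    using p_ge by (intro tendsto_divide tendsto_mult tendsto_const) auto
  moreover have "lsc_ereal J"
    using admissible by (simp add: admissible_def)
  ultimately show ?thesis
    by (intro lsc_ereal_tendsto_le[where J = J, OF _ \<open>z \<longlonglongrightarrow> w\<close> _ Jz])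
qed

lemma profile_norm_eq_imp_ground_state:
  assumes "norm w powr (2 - p) = (2 - p) * lam1 * Tex"
  shows "ground_state p J w"
proof -
  have "0 < norm w"
    using profile_in_H0 by (simp add: H0_def)
  obtain j where j: "J w = ereal j" and "j \<le> lam1 * norm w powr p / p"
    using profile_energy_le[OF assms] admissible_not_MInf[OF admissible, of w] by (cases "J w") auto
  then have "p * j / norm w powr p \<le> lam1"
    using \<open>0 < norm w\<close> p_ge by (simp add: field_simps)
  then have "rayleigh p J w \<le> lambda1 p J"
    using rayleigh_real[where J = J and x = w and p = p, OF j] \<open>0 < norm w\<close> lambda1_real by simp
  with lambda1_le_rayleigh[where p = p, OF profile_in_H0] profile_in_H0 show ?thesis
    by (simp add: ground_state_def)
qed

end

theorem proposition5:
  fixes J :: "'a::{real_inner,complete_space} \<Rightarrow> ereal"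
    and p :: real and f w_star :: 'a and u :: "real \<Rightarrow> 'a"
  assumes "1 \<le> p" and "p < 2"
    and "admissible p J"
    and "lambda1 p J > 0"
    and "f \<in> H0 J"
    and "gradient_flow J f u"
    and "\<exists>T>0. \<forall>t\<ge>T. u t = 0"
    and "\<exists>tk :: nat \<Rightarrow> real. incseq tk \<and> (\<forall>k. 0 \<le> tk k \<and> tk k < extinction_time u) \<and>
           tk \<longlonglongrightarrow> extinction_time u \<and>
           (\<lambda>k. (1 / (1 - tk k / extinction_time u) powr (1 / (2 - p))) *\<^sub>R u (tk k))
             \<longlonglongrightarrow> w_star"
  shows "ereal ((2 - p) * extinction_time u) * lambda1 p J \<le> ereal (norm w_star powr (2 - p))
         \<and> (ereal ((2 - p) * extinction_time u) * lambda1 p J = ereal (norm w_star powr (2 - p))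
              \<longleftrightarrow> ground_state p J w_star)"
proof -
  obtain tk where "\<forall>k. 0 \<le> tk k \<and> tk k < extinction_time u"
    and "(\<lambda>k. (1 / (1 - tk k / extinction_time u) powr (1 / (2 - p))) *\<^sub>R u (tk k)) \<longlonglongrightarrow> w_star"
    using assms(8) by blast
  moreover have "extinguishing_flow J p u"
    using assms(1-7) by (rule gradient_flow_imp_extinguishing_flow)
  ultimately interpret asymptotic_profile J p u tk w_star
    by (intro asymptotic_profile.intro asymptotic_profile_axioms.intro) auto
  have "ereal ((2 - p) * Tex) * lambda1 p J = ereal ((2 - p) * lam1 * Tex)"
    by (simp add: lambda1_real mult.commute mult.left_commute)
  then show ?thesis
  proof (simp only: ereal_less_eq(3) ereal.inject, intro conjI iffI)
    show "(2 - p) * lam1 * Tex \<le> norm w_star powr (2 - p)"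
      by (rule profile_lower_bound)
  next
    assume "(2 - p) * lam1 * Tex = norm w_star powr (2 - p)"
    then show "ground_state p J w_star"
      by (intro profile_norm_eq_imp_ground_state) simp
  next
    assume "ground_state p J w_star"
    then show "(2 - p) * lam1 * Tex = norm w_star powr (2 - p)"
      using ground_state_profile_norm_le profile_lower_bound by (blast intro: antisym)
  qed
qed

end
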